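(* Every commutative monoid is sofic.
   Context: For a non-empty finite set $X$, $\mathrm{Map}(X)$ is the monoid of all maps $X\to X$ under composition (identity $\mathrm{Id}_X$) with the Hamming metric $d_X(f,g)=|\{x\in X : f(x)\ne g(x)\}|/|X|$. For a monoid $M$ with identity $1_M$, finite $K\subset M$ and $\varepsilon,\alpha>0$, a map $\varphi\colon M\to\mathrm{Map}(X)$ is a $(K,\varepsilon)$-morphism if $d_X(\varphi(k_1k_2),\varphi(k_1)\varphi(k_2))\le\varepsilon$ for all $k_1,k_2\in K$ and $d_X(\varphi(1_M),\mathrm{Id}_X)\le\varepsilon$; it is $(K,\alpha)$-injective if $d_X(\varphi(k_1),\varphi(k_2))\ge\alpha$ for all distinct $k_1,k_2\in K$. $M$ is sofic if for every finite $K\subset M$ and every $\varepsilon>0$ there exist a non-empty finite set $X$ and a $(K,1-\varepsilon)$-injective $(K,\varepsilon)$-morphism $\varphi\colon M\to\mathrm{Map}(X)$. *)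

theory Defs
  imports Complex_Main
begin

text \<open>Maps X \<rightarrow> X for a finite set X are represented as functions nat \<Rightarrow> nat
 mapping X into X; only their values on X matter.\<close>

definition hamming :: "nat set \<Rightarrow> (nat \<Rightarrow> nat) \<Rightarrow> (nat \<Rightarrow> nat) \<Rightarrow> real" where
  "hamming X f g = real (card {x \<in> X. f x \<noteq> g x}) / real (card X)"

definition is_map_into :: "nat set \<Rightarrow> ('m \<Rightarrow> nat \<Rightarrow> nat) \<Rightarrow> bool" where
  "is_map_into X \<phi> \<longleftrightarrow> (\<forall>m x. x \<in> X \<longrightarrow> \<phi> m x \<in> X)"

definition K_eps_morphism ::
  "nat set \<Rightarrow> 'm::monoid_mult set \<Rightarrow> real \<Rightarrow> ('m \<Rightarrow> nat \<Rightarrow> nat) \<Rightarrow> bool" where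
  "K_eps_morphism X K \<epsilon> \<phi> \<longleftrightarrow>
     (\<forall>k1\<in>K. \<forall>k2\<in>K. hamming X (\<phi> (k1 * k2)) (\<phi> k1 \<circ> \<phi> k2) \<le> \<epsilon>) \<and>
     hamming X (\<phi> 1) id \<le> \<epsilon>"

definition K_alpha_injective ::
  "nat set \<Rightarrow> 'm set \<Rightarrow> real \<Rightarrow> ('m \<Rightarrow> nat \<Rightarrow> nat) \<Rightarrow> bool" where
  "K_alpha_injective X K \<alpha> \<phi> \<longleftrightarrow>
     (\<forall>k1\<in>K. \<forall>k2\<in>K. k1 \<noteq> k2 \<longrightarrow> hamming X (\<phi> k1) (\<phi> k2) \<ge> \<alpha>)"

definition sofic_monoid :: "'m::monoid_mult itself \<Rightarrow> bool" where
  "sofic_monoid TYPE('m) \<longleftrightarrow>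
     (\<forall>K :: 'm set. \<forall>\<epsilon>::real. finite K \<and> \<epsilon> > 0 \<longrightarrow>
        (\<exists>X :: nat set. \<exists>\<phi> :: 'm \<Rightarrow> nat \<Rightarrow> nat.
           finite X \<and> X \<noteq> {} \<and> is_map_into X \<phi> \<and>
           K_alpha_injective X K (1 - \<epsilon>) \<phi> \<and> K_eps_morphism X K \<epsilon> \<phi>))"

end

theory Submission
  imports Defs "HOL-Library.FuncSet"
begin

text \<open>
Let \<open>K\<close> be a finite subset of a commutative monoid and call \<open>x\<close> separating if
\<open>k \<mapsto> k x\<close> is injective on \<open>K\<close>; non-separating elements form an ideal. Since the
ball of radius \<open>L\<close> spanned by \<open>K\<close> has only polynomially many elements, the separating
elements of the ball cannot grow by a factor \<open>1 + \<epsilon>/2\<close> at every radius, so for some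
\<open>L\<close> almost all separating elements of radius \<open>L + 1\<close> already have radius \<open>L\<close>.
Let \<open>K\<close> act by left multiplication on \<open>W\<close> copies of these separating elements,
plus one copy of each other element of the ball of radius \<open>L + 2\<close> and a sink for
everything leaving that ball. On the copies of separating elements of radius \<open>L\<close> the
action is injective on \<open>K\<close> and multiplicative; for \<open>W\<close> large the remaining
states are an \<open>\<epsilon>\<close>-fraction.
\<close>

definition hamming_dist :: "'a set \<Rightarrow> ('a \<Rightarrow> 'b) \<Rightarrow> ('a \<Rightarrow> 'b) \<Rightarrow> real" where
  "hamming_dist Y f g = real (card {y \<in> Y. f y \<noteq> g y}) / real (card Y)"

lemma hamming_eq_hamming_dist: "hamming = hamming_dist"
  unfolding hamming_def hamming_dist_def by (intro ext) simp

lemma hamming_dist_cong: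
  assumes "\<And>y. y \<in> Y \<Longrightarrow> f y = f' y" and "\<And>y. y \<in> Y \<Longrightarrow> g y = g' y"
  shows "hamming_dist Y f g = hamming_dist Y f' g'"
  unfolding hamming_dist_def using assms by metis

lemma hamming_dist_le:
  assumes "finite Y" "Y \<noteq> {}" "B \<subseteq> Y" "real (card B) \<le> \<epsilon> * real (card Y)"
    and "\<And>y. y \<in> Y - B \<Longrightarrow> f y = g y"
  shows "hamming_dist Y f g \<le> \<epsilon>"
proof -
  have "card {y \<in> Y. f y \<noteq> g y} \<le> card B"
    using assms by (intro card_mono) (auto intro: finite_subset)
  then show ?thesis
    using assms(1,2,4) unfolding hamming_dist_def by (simp add: divide_le_eq card_gt_0_iff)
qed

lemma hamming_dist_ge:
  assumes "finite Y" "Y \<noteq> {}" "B \<subseteq> Y" "real (card B) \<le> \<epsilon> * real (card Y)"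
    and "\<And>y. y \<in> Y - B \<Longrightarrow> f y \<noteq> g y"
  shows "1 - \<epsilon> \<le> hamming_dist Y f g"
proof -
  have "card (Y - B) \<le> card {y \<in> Y. f y \<noteq> g y}"
    using assms by (intro card_mono) auto
  moreover have "card (Y - B) = card Y - card B" and "card B \<le> card Y"
    using assms(1,3) by (auto simp: card_Diff_subset finite_subset card_mono)
  ultimately have "(1 - \<epsilon>) * real (card Y) \<le> real (card {y \<in> Y. f y \<noteq> g y})"
    using assms(4) by (simp add: algebra_simps)
  then show ?thesis
    using assms(1,2) unfolding hamming_dist_def by (simp add: le_divide_eq card_gt_0_iff)
qed

lemma hamming_conjugate:
  assumes h: "bij_betw h X Y" and F: "F ` Y \<subseteq> Y" and G: "G ` Y \<subseteq> Y"
  shows "hamming X (inv_into X h \<circ> F \<circ> h) (inv_into X h \<circ> G \<circ> h) = hamming_dist Y F G"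
proof -
  have inj: "inj_on (inv_into X h) Y"
    using h by (simp add: bij_betw_def inj_on_inv_into)
  have "F (h x) \<in> Y" "G (h x) \<in> Y" if "x \<in> X" for x
    using bij_betw_apply[OF h that] F G by auto
  then have "{x \<in> X. inv_into X h (F (h x)) \<noteq> inv_into X h (G (h x))} = {x \<in> X. F (h x) \<noteq> G (h x)}"
    using inj_on_eq_iff[OF inj] by blast
  moreover have "bij_betw h {x \<in> X. F (h x) \<noteq> G (h x)} {y \<in> Y. F y \<noteq> G y}"
    using h by (auto simp: bij_betw_def inj_on_def)
  ultimately show ?thesis
    unfolding hamming_def hamming_dist_def using bij_betw_same_card[OF h]
    by (simp add: bij_betw_same_card)
qed

lemma conjugate_comp:
  assumes "bij_betw h X Y" and "G ` Y \<subseteq> Y" and "x \<in> X"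
  shows "((inv_into X h \<circ> F \<circ> h) \<circ> (inv_into X h \<circ> G \<circ> h)) x = (inv_into X h \<circ> (F \<circ> G) \<circ> h) x"
  using assms by (simp add: bij_betw_apply bij_betw_inv_into_right image_subset_iff)

lemma conjugate_id:
  assumes "bij_betw h X Y" and "x \<in> X"
  shows "(inv_into X h \<circ> id \<circ> h) x = id x"
  using assms by (simp add: bij_betw_inv_into_left)

lemma nat_model_of_action:
  fixes \<psi> :: "'m \<Rightarrow> 'a \<Rightarrow> 'a"
  assumes finite: "finite Y" and nonempty: "Y \<noteq> {}" and into: "\<And>m. \<psi> m ` Y \<subseteq> Y"
  obtains X :: "nat set" and \<phi> where "finite X" "X \<noteq> {}" "is_map_into X \<phi>"
    "\<And>m m'. hamming X (\<phi> m) (\<phi> m') = hamming_dist Y (\<psi> m) (\<psi> m')"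
    "\<And>m m' m''. hamming X (\<phi> m) (\<phi> m' \<circ> \<phi> m'') = hamming_dist Y (\<psi> m) (\<psi> m' \<circ> \<psi> m'')"
    "\<And>m. hamming X (\<phi> m) id = hamming_dist Y (\<psi> m) id"
proof -
  define X where "X = {0..<card Y}"
  obtain h where h: "bij_betw h X Y"
    using ex_bij_betw_nat_finite[OF finite] unfolding X_def by blast
  define \<phi> where "\<phi> m = inv_into X h \<circ> \<psi> m \<circ> h" for m
  have comp: "(\<psi> m \<circ> \<psi> m') ` Y \<subseteq> Y" for m m'
    using into by (auto simp: image_subset_iff)
  show thesis
  proof (rule that[of X \<phi>])
    show "finite X" "X \<noteq> {}"
      using finite nonempty unfolding X_def by auto
    show "is_map_into X \<phi>"
      using h into unfolding is_map_into_def \<phi>_def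
      by (simp add: bij_betw_apply bij_betw_imp_surj_on image_subset_iff inv_into_into)
    show "hamming X (\<phi> m) (\<phi> m') = hamming_dist Y (\<psi> m) (\<psi> m')" for m m'
      unfolding \<phi>_def using h into into by (rule hamming_conjugate)
    show "hamming X (\<phi> m) (\<phi> m' \<circ> \<phi> m'') = hamming_dist Y (\<psi> m) (\<psi> m' \<circ> \<psi> m'')" for m m' m''
    proof -
      have "hamming X (\<phi> m) (\<phi> m' \<circ> \<phi> m'') = hamming X (\<phi> m) (inv_into X h \<circ> (\<psi> m' \<circ> \<psi> m'') \<circ> h)"
        unfolding hamming_eq_hamming_dist \<phi>_def using h into
        by (intro hamming_dist_cong conjugate_comp) auto
      also have "\<dots> = hamming_dist Y (\<psi> m) (\<psi> m' \<circ> \<psi> m'')"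
        unfolding \<phi>_def using h into comp by (rule hamming_conjugate)
      finally show ?thesis .
    qed
    show "hamming X (\<phi> m) id = hamming_dist Y (\<psi> m) id" for m
    proof -
      have "hamming X (\<phi> m) id = hamming X (\<phi> m) (inv_into X h \<circ> id \<circ> h)"
        unfolding hamming_eq_hamming_dist using h
        by (intro hamming_dist_cong conjugate_id[symmetric]) auto
      also have "\<dots> = hamming_dist Y (\<psi> m) id"
        unfolding \<phi>_def using h into by (rule hamming_conjugate) simp
      finally show ?thesis .
    qed
  qed
qed

lemma sofic_approximation_from_action:
  fixes K :: "'m::monoid_mult set" and \<psi> :: "'m \<Rightarrow> 'a \<Rightarrow> 'a" and \<epsilon> :: real
  assumes Y: "finite Y" "Y \<noteq> {}" and into: "\<And>m. \<psi> m ` Y \<subseteq> Y"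
    and B: "B \<subseteq> Y" "real (card B) \<le> \<epsilon> * real (card Y)"
    and one: "\<And>y. y \<in> Y \<Longrightarrow> \<psi> 1 y = y"
    and mult: "\<And>p q y. p \<in> K \<Longrightarrow> q \<in> K \<Longrightarrow> y \<in> Y - B \<Longrightarrow> \<psi> (p * q) y = \<psi> p (\<psi> q y)"
    and sep: "\<And>p q y. p \<in> K \<Longrightarrow> q \<in> K \<Longrightarrow> p \<noteq> q \<Longrightarrow> y \<in> Y - B \<Longrightarrow> \<psi> p y \<noteq> \<psi> q y"
  shows "\<exists>X \<phi>. finite X \<and> X \<noteq> {} \<and> is_map_into X \<phi> \<and>
    K_alpha_injective X K (1 - \<epsilon>) \<phi> \<and> K_eps_morphism X K \<epsilon> \<phi>"
proof -
  obtain X :: "nat set" and \<phi> where X: "finite X" "X \<noteq> {}" "is_map_into X \<phi>"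
    and dist: "\<And>m m'. hamming X (\<phi> m) (\<phi> m') = hamming_dist Y (\<psi> m) (\<psi> m')"
      "\<And>m m' m''. hamming X (\<phi> m) (\<phi> m' \<circ> \<phi> m'') = hamming_dist Y (\<psi> m) (\<psi> m' \<circ> \<psi> m'')"
      "\<And>m. hamming X (\<phi> m) id = hamming_dist Y (\<psi> m) id"
    using nat_model_of_action[of Y \<psi>, OF Y into] by blast
  have "K_alpha_injective X K (1 - \<epsilon>) \<phi>"
    unfolding K_alpha_injective_def dist using Y B sep by (blast intro: hamming_dist_ge)
  moreover have "K_eps_morphism X K \<epsilon> \<phi>"
    unfolding K_eps_morphism_def dist
  proof (intro conjI ballI)
    fix p q assume "p \<in> K" "q \<in> K"
    then show "hamming_dist Y (\<psi> (p * q)) (\<psi> p \<circ> \<psi> q) \<le> \<epsilon>"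
      using mult by (intro hamming_dist_le[OF Y B]) simp
  next
    show "hamming_dist Y (\<psi> 1) id \<le> \<epsilon>"
      using one by (intro hamming_dist_le[OF Y B]) simp
  qed
  ultimately show ?thesis
    using X by blast
qed

lemma polynomial_less_power:
  fixes q :: real
  assumes "1 < q"
  shows "\<exists>L. real (L + 1) ^ k < q ^ L"
proof -
  define c where "c = ln q"
  have c: "0 < c"
    using assms by (simp add: c_def)
  have "(\<lambda>L. (c * real L) ^ k / exp (c * real L)) \<longlonglongrightarrow> 0"
    by (rule filterlim_compose[OF tendsto_power_div_exp_0])
      (rule filterlim_tendsto_pos_mult_at_top[OF tendsto_const c filterlim_real_sequentially])
  then have "(\<lambda>L. (2 / c) ^ k * ((c * real L) ^ k / exp (c * real L))) \<longlonglongrightarrow> 0"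
    by (rule tendsto_mult_right_zero)
  moreover have "(2 / c) ^ k * ((c * real L) ^ k / exp (c * real L)) = (2 * real L) ^ k / q ^ L" for L
  proof -
    have "exp (c * real L) = q ^ L"
      using assms exp_of_nat_mult[of L c] by (simp add: c_def mult.commute)
    moreover have "(2 / c) ^ k * (c * real L) ^ k = (2 / c * (c * real L)) ^ k"
      by (rule power_mult_distrib[symmetric])
    moreover have "2 / c * (c * real L) = 2 * real L"
      using c by simp
    ultimately show ?thesis
      by simp
  qed
  ultimately have "(\<lambda>L. (2 * real L) ^ k / q ^ L) \<longlonglongrightarrow> 0"
    by simp
  then have "\<forall>\<^sub>F L in sequentially. (2 * real L) ^ k / q ^ L < 1"
    by (rule order_tendstoD(2)) simp
  then obtain N where N: "\<And>L. N \<le> L \<Longrightarrow> (2 * real L) ^ k / q ^ L < 1"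
    unfolding eventually_sequentially by blast
  define L where "L = Suc N"
  have "real (L + 1) ^ k \<le> (2 * real L) ^ k"
    unfolding L_def by (intro power_mono) auto
  also have "\<dots> < q ^ L"
    using N[of L] assms by (simp add: L_def divide_less_eq)
  finally show ?thesis ..
qed

lemma polynomial_growth_slow_step:
  fixes s :: "nat \<Rightarrow> nat" and d :: real
  assumes "0 < s 0" and "\<And>L. s L \<le> (L + 1) ^ k" and "0 < d"
  shows "\<exists>L. real (s (Suc L)) \<le> (1 + d) * real (s L)"
proof (rule ccontr)
  assume "\<not> ?thesis"
  then have fast: "(1 + d) * real (s L) < real (s (Suc L))" for L
    by (simp add: not_le)
  have exp_growth: "(1 + d) ^ L \<le> real (s L)" for L
  proof (induction L)
    case 0
    then show ?case
      using assms(1) by simp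
  next
    case (Suc L)
    have "(1 + d) ^ Suc L \<le> (1 + d) * real (s L)"
      using Suc assms(3) by simp
    also have "\<dots> < real (s (Suc L))"
      by (rule fast)
    finally show ?case
      by simp
  qed
  obtain L where "real (L + 1) ^ k < (1 + d) ^ L"
    using polynomial_less_power assms(3) by fastforce
  also have "\<dots> \<le> real (s L)"
    by (rule exp_growth)
  also have "\<dots> \<le> real (L + 1) ^ k"
    using assms(2)[of L] by (metis of_nat_le_iff of_nat_power)
  finally show False
    by simp
qed

text \<open>By commutativity this is the set of products of at most \<open>L\<close> elements of \<open>K\<close>;
  recording exponents rather than words is what bounds its size polynomially in \<open>L\<close>.\<close>

definition cayley_ball :: "'m::comm_monoid_mult set \<Rightarrow> nat \<Rightarrow> 'm set" where
  "cayley_ball K L = {\<Prod>k\<in>K. k ^ f k | f. (\<Sum>k\<in>K. f k) \<le> L}"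

lemma cayley_ball_mono: "L \<le> L' \<Longrightarrow> cayley_ball K L \<subseteq> cayley_ball K L'"
  unfolding cayley_ball_def by fastforce

lemma one_mem_cayley_ball: "1 \<in> cayley_ball K L"
  unfolding cayley_ball_def by (intro CollectI exI[of _ "\<lambda>_. 0"]) simp

lemma mult_mem_cayley_ball:
  assumes K: "finite K" and p: "p \<in> K" and x: "x \<in> cayley_ball K L"
  shows "p * x \<in> cayley_ball K (Suc L)"
proof -
  obtain f where x_eq: "x = (\<Prod>k\<in>K. k ^ f k)" and f: "(\<Sum>k\<in>K. f k) \<le> L"
    using x unfolding cayley_ball_def by blast
  define g where "g k = f k + (if k = p then 1 else 0)" for k
  have "(\<Prod>k\<in>K. k ^ g k) = (\<Prod>k\<in>K. k ^ f k) * (\<Prod>k\<in>K. if k = p then k else 1)"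
    unfolding g_def power_add prod.distrib[symmetric] by (intro prod.cong) auto
  also have "(\<Prod>k\<in>K. if k = p then k else 1) = p"
    using K p by simp
  finally have "p * x = (\<Prod>k\<in>K. k ^ g k)"
    using x_eq by (simp add: mult.commute)
  moreover have "(\<Sum>k\<in>K. g k) = (\<Sum>k\<in>K. f k) + 1"
    using K p by (simp add: g_def sum.distrib)
  ultimately show ?thesis
    using f unfolding cayley_ball_def by (intro CollectI exI[of _ g]) simp
qed

lemma cayley_ball_subset_image:
  assumes "finite K"
  shows "cayley_ball K L \<subseteq> (\<lambda>f. \<Prod>k\<in>K. k ^ f k) ` (K \<rightarrow>\<^sub>E {..L})"
proof
  fix x assume "x \<in> cayley_ball K L"
  then obtain f where x: "x = (\<Prod>k\<in>K. k ^ f k)" and f: "(\<Sum>k\<in>K. f k) \<le> L"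
    unfolding cayley_ball_def by blast
  show "x \<in> (\<lambda>f. \<Prod>k\<in>K. k ^ f k) ` (K \<rightarrow>\<^sub>E {..L})"
  proof (rule image_eqI[where x = "restrict f K"])
    show "x = (\<Prod>k\<in>K. k ^ restrict f K k)"
      using x by (simp cong: prod.cong)
    have "f k \<le> L" if "k \<in> K" for k
      using member_le_sum[OF that _ assms, of f] f by simp
    then show "restrict f K \<in> K \<rightarrow>\<^sub>E {..L}"
      by simp
  qed
qed

lemma finite_cayley_ball: "finite K \<Longrightarrow> finite (cayley_ball K L)"
  by (rule finite_subset[OF cayley_ball_subset_image]) (simp_all add: finite_PiE)

lemma card_cayley_ball_le:
  assumes "finite K"
  shows "card (cayley_ball K L) \<le> (L + 1) ^ card K"
proof -
  have "card (cayley_ball K L) \<le> card ((\<lambda>f. \<Prod>k\<in>K. k ^ f k) ` (K \<rightarrow>\<^sub>E {..L}))"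
    using assms by (intro card_mono cayley_ball_subset_image) (simp_all add: finite_PiE)
  also have "\<dots> \<le> card (K \<rightarrow>\<^sub>E {..L})"
    by (rule card_image_le) (simp add: assms finite_PiE)
  also have "\<dots> = (L + 1) ^ card K"
    using assms by (simp add: card_PiE)
  finally show ?thesis .
qed

definition separating :: "'m::times set \<Rightarrow> 'm set" where
  "separating K = {x. inj_on (\<lambda>k. k * x) K}"

lemma one_mem_separating: "(1::'m::monoid_mult) \<in> separating K"
  unfolding separating_def by simp

lemma mult_not_separating:
  fixes m x :: "'m::comm_monoid_mult"
  assumes "x \<notin> separating K"
  shows "m * x \<notin> separating K"
proof -
  obtain p q where "p \<in> K" "q \<in> K" "p \<noteq> q" "p * x = q * x"
    using assms unfolding separating_def inj_on_def by blast
  moreover from \<open>p * x = q * x\<close> have "p * (m * x) = q * (m * x)"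
    by (simp add: mult.left_commute[of _ m])
  ultimately show ?thesis
    unfolding separating_def inj_on_def by blast
qed

locale layered_model =
  fixes K :: "'m::comm_monoid_mult set" and L W :: nat
  assumes finite_K: "finite K" and W_pos: "0 < W"
begin

definition core :: "'m set" where
  "core = separating K \<inter> cayley_ball K L"

definition thick :: "'m set" where
  "thick = separating K \<inter> cayley_ball K (Suc L)"

definition frame :: "'m set" where
  "frame = cayley_ball K (Suc (Suc L))"

text \<open>The state \<open>Some (x, i)\<close> is the \<open>i\<close>-th copy of \<open>x\<close>: elements of \<open>thick\<close> have
  \<open>W\<close> copies, the other elements of \<open>frame\<close> one copy, and \<open>None\<close> absorbs whatever
  leaves \<open>frame\<close>.\<close>

definition cell :: "'m \<Rightarrow> nat \<Rightarrow> ('m \<times> nat) option" where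
  "cell z i = (if z \<in> thick then Some (z, i) else if z \<in> frame then Some (z, 0) else None)"

definition act :: "'m \<Rightarrow> ('m \<times> nat) option \<Rightarrow> ('m \<times> nat) option" where
  "act m y = (case y of None \<Rightarrow> None | Some (x, i) \<Rightarrow> cell (m * x) i)"

definition states :: "('m \<times> nat) option set" where
  "states = insert None (Some ` (thick \<times> {..<W} \<union> (frame - thick) \<times> {0}))"

definition boundary :: "('m \<times> nat) option set" where
  "boundary = insert None (Some ` ((thick - core) \<times> {..<W} \<union> (frame - thick) \<times> {0}))"

lemma core_subset_thick: "core \<subseteq> thick"
  unfolding core_def thick_def using cayley_ball_mono[of L "Suc L" K] by auto

lemma mult_core_mem_cayley_ball: "k \<in> K \<Longrightarrow> x \<in> core \<Longrightarrow> k * x \<in> cayley_ball K (Suc L)"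
  unfolding core_def using finite_K by (auto intro: mult_mem_cayley_ball)

lemma cayley_ball_subset_frame: "cayley_ball K (Suc L) \<subseteq> frame"
  unfolding frame_def by (rule cayley_ball_mono) simp

lemma thick_subset_frame: "thick \<subseteq> frame"
  unfolding thick_def using cayley_ball_subset_frame by auto

lemma finite_frame: "finite frame"
  unfolding frame_def using finite_K by (rule finite_cayley_ball)

lemma finite_thick: "finite thick"
  using finite_frame thick_subset_frame by (rule finite_subset[rotated])

lemma finite_states: "finite states"
  unfolding states_def using finite_frame finite_thick by simp

lemma boundary_subset_states: "boundary \<subseteq> states"
  unfolding boundary_def states_def by auto

lemma states_diff_boundary: "states - boundary = Some ` (core \<times> {..<W})"
  unfolding states_def boundary_def using core_subset_thick by auto

lemma card_states: "card states = card core * W + card boundary"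
proof -
  have "card (states - boundary) = card core * W"
    unfolding states_diff_boundary by (simp add: card_image card_cartesian_product)
  then show ?thesis
    using card_Diff_subset[OF finite_subset[OF boundary_subset_states finite_states]
        boundary_subset_states] card_mono[OF finite_states boundary_subset_states]
    by simp
qed

lemma card_states_le: "card states \<le> 1 + card thick * W + card frame"
proof -
  have "finite (thick \<times> {..<W} \<union> (frame - thick) \<times> {0})"
    using finite_frame finite_thick by simp
  then have "card states \<le> Suc (card (thick \<times> {..<W} \<union> (frame - thick) \<times> {0}))"
    unfolding states_def by (simp add: card_insert_if card_image_le le_SucI)
  also have "card (thick \<times> {..<W} \<union> (frame - thick) \<times> {0}) \<le> card (thick \<times> {..<W}) + card ((frame - thick) \<times> {0::nat})"
    by (rule card_Un_le)
  also have "card ((frame - thick) \<times> {0::nat}) \<le> card frame"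
    using finite_frame by (simp add: card_cartesian_product card_mono)
  finally show ?thesis
    by (simp add: card_cartesian_product)
qed

lemma cell_mem_states: "i < W \<Longrightarrow> cell z i \<in> states"
  unfolding cell_def states_def using W_pos by auto

lemma act_into_states: "act m ` states \<subseteq> states"
proof
  fix y' assume "y' \<in> act m ` states"
  then obtain y where y: "y \<in> states" and y': "y' = act m y"
    by blast
  have "y = None \<or> (\<exists>x i. y = Some (x, i) \<and> i < W)"
    using y W_pos unfolding states_def by auto
  moreover have "None \<in> states"
    unfolding states_def by simp
  ultimately show "y' \<in> states"
    unfolding y' act_def using cell_mem_states by auto
qed

lemma act_one: "y \<in> states \<Longrightarrow> act 1 y = y"
  unfolding states_def act_def cell_def by auto

lemma cell_outside_thick: "z \<notin> thick \<Longrightarrow> cell z i = cell z j"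
  unfolding cell_def by simp

lemma act_mult:
  assumes p: "p \<in> K" and q: "q \<in> K" and y: "y \<in> states - boundary"
  shows "act (p * q) y = act p (act q y)"
proof -
  obtain x i where y_eq: "y = Some (x, i)" and x: "x \<in> core"
    using y unfolding states_diff_boundary by auto
  have qx: "q * x \<in> cayley_ball K (Suc L)"
    using q x by (rule mult_core_mem_cayley_ball)
  show ?thesis
  proof (cases "q * x \<in> separating K")
    case True
    then have "act q y = Some (q * x, i)"
      using qx unfolding y_eq act_def cell_def thick_def by simp
    then show ?thesis
      unfolding y_eq by (simp add: act_def mult.assoc)
  next
    case False
    then have "act q y = Some (q * x, 0)"
      using qx cayley_ball_subset_frame unfolding y_eq act_def cell_def thick_def by auto
    moreover have "p * (q * x) \<notin> thick"
      using mult_not_separating[OF False] unfolding thick_def by simp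
    ultimately show ?thesis
      unfolding y_eq using cell_outside_thick by (simp add: act_def mult.assoc)
  qed
qed

lemma act_separates:
  assumes p: "p \<in> K" and q: "q \<in> K" and "p \<noteq> q" and y: "y \<in> states - boundary"
  shows "act p y \<noteq> act q y"
proof -
  obtain x i where y_eq: "y = Some (x, i)" and x: "x \<in> core"
    using y unfolding states_diff_boundary by auto
  have "p * x \<noteq> q * x"
    using x p q \<open>p \<noteq> q\<close> unfolding core_def separating_def inj_on_def by blast
  moreover have "p * x \<in> frame" "q * x \<in> frame"
    using mult_core_mem_cayley_ball[OF _ x] p q cayley_ball_subset_frame by auto
  ultimately show ?thesis
    unfolding y_eq act_def cell_def by auto
qed

lemma small_boundary:
  assumes \<epsilon>: "0 < \<epsilon>" and slow: "real (card thick) \<le> (1 + \<epsilon> / 2) * real (card core)"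
    and core: "core \<noteq> {}" and W: "1 + real (card frame) \<le> \<epsilon> / 2 * real W"
  shows "real (card boundary) \<le> \<epsilon> * real (card states)"
proof -
  define a b where "a = real (card core)" and "b = real (card thick)"
  have "1 \<le> a"
    using core finite_subset[OF core_subset_thick finite_thick]
    unfolding a_def by (simp add: Suc_le_eq card_gt_0_iff)
  have "card boundary + card core * W \<le> 1 + card thick * W + card frame"
    using card_states card_states_le by simp
  then have "real (card boundary + card core * W) \<le> real (1 + card thick * W + card frame)"
    by (rule of_nat_mono)
  then have "real (card boundary) + a * W \<le> 1 + b * W + card frame"
    unfolding a_def b_def by simp
  moreover have "(b - a) * W \<le> \<epsilon> / 2 * a * W"
    using slow unfolding a_def b_def by (intro mult_right_mono) (auto simp: algebra_simps)
  moreover have "\<epsilon> / 2 * W \<le> \<epsilon> / 2 * a * W"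
    using \<open>1 \<le> a\<close> \<epsilon> by (simp add: mult_le_cancel_left1 mult_le_cancel_right1)
  ultimately have "real (card boundary) \<le> \<epsilon> * (a * W)"
    using W by (simp add: algebra_simps)
  also have "\<dots> \<le> \<epsilon> * real (card states)"
    using \<epsilon> card_states unfolding a_def by simp
  finally show ?thesis .
qed

end

lemma comm_monoid_sofic_approximation:
  fixes K :: "'m::comm_monoid_mult set" and \<epsilon> :: real
  assumes K: "finite K" and \<epsilon>: "0 < \<epsilon>"
  shows "\<exists>X \<phi>. finite X \<and> X \<noteq> {} \<and> is_map_into X \<phi> \<and>
    K_alpha_injective X K (1 - \<epsilon>) \<phi> \<and> K_eps_morphism X K \<epsilon> \<phi>"
proof -
  define s where "s L = card (separating K \<inter> cayley_ball K L)" for L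
  have one: "1 \<in> separating K \<inter> cayley_ball K L" for L
    using one_mem_separating one_mem_cayley_ball by blast
  then have "0 < s L" for L
    unfolding s_def using finite_cayley_ball[OF K] by (auto simp: card_gt_0_iff)
  moreover have "s L \<le> (L + 1) ^ card K" for L
    using card_mono[OF finite_cayley_ball[OF K] Int_lower2] card_cayley_ball_le[OF K]
    unfolding s_def by (rule le_trans)
  ultimately obtain L where slow: "real (s (Suc L)) \<le> (1 + \<epsilon> / 2) * real (s L)"
    using polynomial_growth_slow_step \<epsilon> by (meson half_gt_zero)
  define c where "c = card (cayley_ball K (Suc (Suc L)))"
  define W where "W = nat \<lceil>2 * (1 + real c) / \<epsilon>\<rceil> + 1"
  interpret layered_model K L W
    by unfold_locales (simp_all add: K W_def)
  have "2 * (1 + real c) / \<epsilon> \<le> real W"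
    unfolding W_def by linarith
  then have "1 + real (card frame) \<le> \<epsilon> / 2 * real W"
    using \<epsilon> unfolding frame_def c_def by (simp add: field_simps)
  moreover have "core \<noteq> {}"
    using one unfolding core_def by blast
  ultimately have small: "real (card boundary) \<le> \<epsilon> * real (card states)"
    using slow \<epsilon> unfolding s_def core_def[symmetric] thick_def[symmetric]
    by (intro small_boundary) auto
  have "states \<noteq> {}"
    unfolding states_def by simp
  then show ?thesis
    using finite_states act_into_states boundary_subset_states small act_one act_mult act_separates
    by (intro sofic_approximation_from_action)
qed

theorem proposition4p3:
  shows "sofic_monoid TYPE('m::comm_monoid_mult)"
  unfolding sofic_monoid_def using comm_monoid_sofic_approximation by blast

end
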